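(* Let $Z_1,\dots,Z_n$ be independent real-valued sub-Gaussian random variables with parameter $\sigma^2$, let $\alpha\in(0,1]$, and fix $p_0\in(0,\frac12]$. Then there is an event $\mathcal{E}^{\mathrm{ord}}_{p_0}$ with $\mathbb{P}[\mathcal{E}^{\mathrm{ord}}_{p_0}]\ge 1-2e^{-0.3n}$ on which, for all $p\in[p_0,\frac12]$ and all sub-collections $V\subseteq\{Z_1,\dots,Z_n\}$ with $|V|\ge\max\{n\alpha,\,2/p_0\}$, $$-\sigma\sqrt{\tfrac{4}{p_0}\big(\tfrac1\alpha+1\big)}\ \le\ V^{(\lceil(1-p)|V|\rceil)}\ \le\ V^{(\lfloor p|V|\rfloor)}\ \le\ \sigma\sqrt{\tfrac{4}{p_0}\big(\tfrac1\alpha+1\big)}.$$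
   Context: A real random variable $Z$ is sub-Gaussian with parameter $\sigma^2$ if $\mathbb{E}[e^{\lambda Z}]\le e^{\lambda^2\sigma^2/2}$ for all $\lambda\in\mathbb{R}$. For a finite multiset of reals $\{v_1,\dots,v_m\}$, its order statistics are $v^{(1)}\ge v^{(2)}\ge\dots\ge v^{(m)}$ (so $v^{(t)}$ is the $t$-th largest). Sub-collections $V$ are indexed by subsets of $[n]$. *)

theory Defs
  imports "HOL-Probability.Probability" "HOL-Library.Multiset"
begin

definition subgaussian :: "'a measure \<Rightarrow> ('a \<Rightarrow> real) \<Rightarrow> real \<Rightarrow> bool" where
  "subgaussian M Z s2 \<longleftrightarrow> Z \<in> borel_measurable M \<and>
     (\<forall>l::real. integrable M (\<lambda>x. exp (l * Z x)) \<and>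
        (\<integral>x. exp (l * Z x) \<partial>M) \<le> exp (l\<^sup>2 * s2 / 2))"

text \<open>Order statistic: the t-th largest element (1-indexed) of a finite multiset of reals.\<close>
definition ord_stat :: "real multiset \<Rightarrow> nat \<Rightarrow> real" where
  "ord_stat V t = rev (sorted_list_of_multiset V) ! (t - 1)"

end

theory Submission
  imports Defs
begin

text \<open>
  Put \<open>c = 2 / p0 * (1 / \<alpha> + 1)\<close> and \<open>B = \<sigma> * sqrt (2 * c)\<close>. By the Chernoff bound each
  \<open>Z i\<close> exceeds \<open>B\<close>, and likewise falls below \<open>- B\<close>, with probability at most \<open>exp (- c)\<close>.
  For \<open>k = \<lceil>p0 * n * \<alpha> / 2\<rceil>\<close>, independence and a union bound over the \<open>k\<close>-subsets of the
  indices show that at least \<open>k\<close> of the \<open>Z i\<close> exceed \<open>B\<close> with probability at most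
  \<open>(n choose k) * exp (- c * k) \<le> 2 ^ n * exp (- n) \<le> exp (- 0.3 * n)\<close>, and the same holds
  below \<open>- B\<close>. Outside these two events every admissible sub-collection \<open>V\<close> has fewer than
  \<open>k \<le> \<lfloor>p * |V|\<rfloor>\<close> values above \<open>B\<close> and fewer than \<open>k\<close> below \<open>- B\<close>, which traps the
  order statistics of ranks \<open>\<lfloor>p * |V|\<rfloor>\<close> and \<open>\<lceil>(1 - p) * |V|\<rceil> = |V| - \<lfloor>p * |V|\<rfloor>\<close> in
  \<open>[- B, B]\<close>.
\<close>

lemma size_filter_mset_sorted_list:
  "size (filter_mset P W) = length (filter P (sorted_list_of_multiset W))"
  by (metis mset_filter mset_sorted_list_of_multiset size_mset)

lemma length_sorted_list_of_multiset [simp]: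
  "length (sorted_list_of_multiset W) = size W"
  by (metis mset_sorted_list_of_multiset size_mset)

lemma ord_stat_eq_nth:
  assumes "1 \<le> t" "t \<le> size W"
  shows "ord_stat W t = sorted_list_of_multiset W ! (size W - t)"
  using assms unfolding ord_stat_def
  by (simp add: rev_nth Suc_diff_le)

lemma ord_stat_antimono:
  assumes "1 \<le> t" "t \<le> t'" "t' \<le> size W"
  shows "ord_stat W t' \<le> ord_stat W t"
  using assms by (simp add: ord_stat_eq_nth sorted_nth_mono)

lemma ord_stat_le_if_few_greater:
  assumes "1 \<le> t" "t \<le> size W" and few: "size (filter_mset (\<lambda>x. B < x) W) < t"
  shows "ord_stat W t \<le> B"
proof (rule ccontr)
  define xs where "xs = sorted_list_of_multiset W"
  define j where "j = size W - t"
  have j: "j < length xs" "length (drop j xs) = t"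
    using assms(1,2) unfolding xs_def j_def by simp_all
  assume "\<not> ord_stat W t \<le> B"
  then have "B < xs ! j" using assms(1,2) by (simp add: ord_stat_eq_nth xs_def j_def)
  moreover have "sorted (drop j xs)" by (simp add: xs_def)
  ultimately have "filter (\<lambda>x. B < x) (drop j xs) = drop j xs"
    using j(1) by (auto simp flip: Cons_nth_drop_Suc intro!: filter_True)
  then have "t \<le> length (filter (\<lambda>x. B < x) xs)"
    using j(2) by (metis append_take_drop_id filter_append length_append le_add2)
  then show False using few by (simp add: size_filter_mset_sorted_list xs_def)
qed

lemma ord_stat_ge_if_few_less:
  assumes "1 \<le> t" "t \<le> size W" and few: "size (filter_mset (\<lambda>x. x < a) W) \<le> size W - t"
  shows "a \<le> ord_stat W t"
proof (rule ccontr)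
  define xs where "xs = sorted_list_of_multiset W"
  define j where "j = size W - t"
  have j: "j < length xs" "length (take (Suc j) xs) = Suc j"
    using assms(1,2) unfolding xs_def j_def by simp_all
  assume "\<not> a \<le> ord_stat W t"
  then have "xs ! j < a" using assms(1,2) by (simp add: ord_stat_eq_nth xs_def j_def)
  moreover have "sorted (take (Suc j) xs)" by (simp add: xs_def)
  ultimately have "filter (\<lambda>x. x < a) (take (Suc j) xs) = take (Suc j) xs"
    using j(1) by (auto simp: take_Suc_conv_app_nth sorted_append intro!: filter_True)
  then have "Suc j \<le> length (filter (\<lambda>x. x < a) xs)"
    using j(2) by (metis append_take_drop_id filter_append length_append le_add1)
  then show False using few by (simp add: size_filter_mset_sorted_list xs_def j_def)
qed

lemma nat_ceiling_complement:
  assumes "0 \<le> p" "p \<le> 1"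
  shows "nat \<lceil>(1 - p) * real m\<rceil> = m - nat \<lfloor>p * real m\<rfloor>"
proof -
  have "\<lceil>(1 - p) * real m\<rceil> = int m - \<lfloor>p * real m\<rfloor>"
    using ceiling_add_of_int[of "- (p * real m)" "int m"]
    by (simp add: algebra_simps ceiling_minus)
  moreover have "\<lfloor>p * real m\<rfloor> \<le> int m"
    using assms mult_left_le_one_le[of "real m" p] by (simp add: floor_le_iff)
  ultimately show ?thesis using assms by (simp add: nat_diff_distrib)
qed

lemma nat_ceiling_half_le:
  fixes x y :: real
  assumes "x \<le> y" "2 \<le> y"
  shows "real (nat \<lceil>x / 2\<rceil>) \<le> y"
proof (cases "2 \<le> x")
  case True
  then show ?thesis using of_int_ceiling_le_add_one[of "x / 2"] assms(1) by linarith
next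
  case False
  then have "\<lceil>x / 2\<rceil> \<le> 1" by (simp add: ceiling_le_iff)
  then show ?thesis using assms(2) by linarith
qed

lemma ord_stats_within_thresholds:
  fixes W :: "real multiset" and p :: real
  defines "m \<equiv> real (size W)"
  assumes few_greater: "size (filter_mset (\<lambda>x. B < x) W) < k"
    and few_less: "size (filter_mset (\<lambda>x. x < a) W) < k"
    and p: "0 \<le> p" "p \<le> 1/2" and k: "real k \<le> p * m"
  shows "a \<le> ord_stat W (nat \<lceil>(1 - p) * m\<rceil>)
    \<and> ord_stat W (nat \<lceil>(1 - p) * m\<rceil>) \<le> ord_stat W (nat \<lfloor>p * m\<rfloor>)
    \<and> ord_stat W (nat \<lfloor>p * m\<rfloor>) \<le> B"
proof -
  define t where "t = nat \<lfloor>p * m\<rfloor>"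
  have "k \<le> t" using k unfolding t_def by (simp add: le_nat_floor)
  then have t: "1 \<le> t" "k \<le> t" using few_greater by linarith+
  have "p * m \<le> m / 2" using p mult_right_mono[of p "1/2" m] unfolding m_def by simp
  moreover have "real t \<le> p * m" using p of_nat_floor[of "p * m"] unfolding t_def m_def by simp
  ultimately have "2 * real t \<le> m" by linarith
  then have "2 * t \<le> size W" unfolding m_def by linarith
  moreover have "nat \<lceil>(1 - p) * m\<rceil> = size W - t"
    using p unfolding t_def m_def by (simp add: nat_ceiling_complement)
  ultimately show ?thesis
    using t few_greater few_less unfolding t_def[symmetric]
    by (auto intro: ord_stat_le_if_few_greater ord_stat_ge_if_few_less ord_stat_antimono)
qed

lemma ord_stats_of_subfamily_within_thresholds:
  fixes f :: "'i \<Rightarrow> real" and V :: "'i set" and p :: real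
  defines "W \<equiv> image_mset f (mset_set V)" and "m \<equiv> real (card V)"
  assumes "finite I" "V \<subseteq> I"
    and few_greater: "card {i\<in>I. B < f i} < k" and few_less: "card {i\<in>I. f i < a} < k"
    and p: "0 \<le> p" "p \<le> 1/2" and k: "real k \<le> p * m"
  shows "a \<le> ord_stat W (nat \<lceil>(1 - p) * m\<rceil>)
    \<and> ord_stat W (nat \<lceil>(1 - p) * m\<rceil>) \<le> ord_stat W (nat \<lfloor>p * m\<rfloor>)
    \<and> ord_stat W (nat \<lfloor>p * m\<rfloor>) \<le> B"
proof -
  have size_W: "size W = card V" by (simp add: W_def)
  have restrict: "size (filter_mset P W) \<le> card {i\<in>I. P (f i)}" for P
  proof -
    have "size (filter_mset P W) = card {i\<in>V. P (f i)}"
      using finite_subset[OF \<open>V \<subseteq> I\<close> \<open>finite I\<close>] by (simp add: W_def filter_mset_image_mset)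
    also have "\<dots> \<le> card {i\<in>I. P (f i)}" using \<open>finite I\<close> \<open>V \<subseteq> I\<close> by (intro card_mono) auto
    finally show ?thesis .
  qed
  have "real k \<le> p * real (size W)" using k by (simp add: m_def size_W)
  from ord_stats_within_thresholds[OF le_less_trans[OF restrict few_greater]
      le_less_trans[OF restrict few_less] p this]
  show ?thesis by (simp add: m_def size_W)
qed

lemma subgaussian_uminus:
  assumes "subgaussian M Z s2"
  shows "subgaussian M (\<lambda>x. - Z x) s2"
proof -
  have "integrable M (\<lambda>x. exp ((- l) * Z x)) \<and> (\<integral>x. exp ((- l) * Z x) \<partial>M) \<le> exp ((- l)\<^sup>2 * s2 / 2)"
    for l
    using assms unfolding subgaussian_def by blast
  then show ?thesis using assms unfolding subgaussian_def by simp
qed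

context prob_space
begin

lemma subgaussian_Chernoff:
  assumes "subgaussian M Z s2" "0 < l"
  shows "prob {x\<in>space M. t \<le> Z x} \<le> exp (l\<^sup>2 * s2 / 2 - l * t)"
proof -
  have [measurable]: "Z \<in> borel_measurable M" and int: "integrable M (\<lambda>x. exp (l * Z x))"
    and mgf: "(\<integral>x. exp (l * Z x) \<partial>M) \<le> exp (l\<^sup>2 * s2 / 2)"
    using assms(1) unfolding subgaussian_def by auto
  have "{x\<in>space M. t \<le> Z x} = {x\<in>space M. exp (l * t) \<le> exp (l * Z x)}"
    using assms(2) by auto
  also have "prob \<dots> \<le> (\<integral>x. exp (l * Z x) \<partial>M) / exp (l * t)"
    by (rule integral_Markov_inequality_measure[OF int, where A="space M"]) auto
  also have "\<dots> \<le> exp (l\<^sup>2 * s2 / 2) / exp (l * t)"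
    using mgf by (simp add: divide_right_mono)
  finally show ?thesis by (simp add: exp_diff)
qed

lemma subgaussian_zero_pos_null:
  assumes "subgaussian M Z 0"
  shows "prob {x\<in>space M. 0 < Z x} = 0"
proof -
  have [measurable]: "Z \<in> borel_measurable M" using assms unfolding subgaussian_def by auto
  have null: "prob {x\<in>space M. e \<le> Z x} = 0" if "0 < e" for e
  proof (rule ccontr)
    define a where "a = prob {x\<in>space M. e \<le> Z x}"
    assume "prob {x\<in>space M. e \<le> Z x} \<noteq> 0"
    then have "0 < a" unfolding a_def using measure_nonneg[of M] by (simp add: order_less_le)
    define l where "l = 2 / (a * e)"
    have "0 < l" using \<open>0 < a\<close> \<open>0 < e\<close> by (simp add: l_def)
    have "a \<le> exp (- (l * e))" using subgaussian_Chernoff[OF assms \<open>0 < l\<close>, of e] by (simp add: a_def)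
    also have "\<dots> = 1 / exp (l * e)" by (simp add: exp_minus field_simps)
    also have "\<dots> < 1 / (l * e)"
    proof (rule divide_strict_left_mono)
      show "l * e < exp (l * e)" using exp_ge_add_one_self[of "l * e"] by linarith
    qed (use \<open>0 < l\<close> \<open>0 < e\<close> in auto)
    also have "\<dots> = a / 2" using \<open>0 < a\<close> \<open>0 < e\<close> by (simp add: l_def)
    finally show False using \<open>0 < a\<close> by simp
  qed
  have "{x\<in>space M. 0 < Z x} = (\<Union>j. {x\<in>space M. 1 / real (Suc j) \<le> Z x})"
  proof (intro equalityI subsetI)
    fix x assume x: "x \<in> {x\<in>space M. 0 < Z x}"
    then obtain j where "0 < j" "inverse (real j) < Z x" using ex_inverse_of_nat_less by blast
    then have "1 / real (Suc (j - 1)) \<le> Z x" by (simp add: inverse_eq_divide)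
    then show "x \<in> (\<Union>j. {x\<in>space M. 1 / real (Suc j) \<le> Z x})" using x by blast
  qed (auto intro: less_le_trans[rotated])
  also have "\<dots> \<in> null_sets M"
    using null by (intro null_sets_UN null_setsI) (auto simp: emeasure_eq_measure)
  finally show ?thesis by (simp add: measure_def null_setsD1)
qed

lemma subgaussian_tail:
  assumes "subgaussian M Z (\<sigma>\<^sup>2)" "0 \<le> \<sigma>" "0 \<le> c"
  shows "prob {x\<in>space M. \<sigma> * sqrt (2 * c) < Z x} \<le> exp (- c)"
proof -
  have [measurable]: "Z \<in> borel_measurable M" using assms(1) unfolding subgaussian_def by auto
  consider "\<sigma> = 0" | "c = 0" | "0 < \<sigma>" "0 < c" using assms(2,3) by linarith
  then show ?thesis
  proof cases
    case 1
    then show ?thesis using subgaussian_zero_pos_null assms(1) by simp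
  next
    case 2
    then show ?thesis by simp
  next
    case 3
    define t where "t = \<sigma> * sqrt (2 * c)"
    define l where "l = t / \<sigma>\<^sup>2"
    have "0 < l" using 3 by (simp add: l_def t_def)
    have "prob {x\<in>space M. t < Z x} \<le> prob {x\<in>space M. t \<le> Z x}"
      by (intro finite_measure_mono) auto
    also have "\<dots> \<le> exp (l\<^sup>2 * \<sigma>\<^sup>2 / 2 - l * t)" by (rule subgaussian_Chernoff[OF assms(1) \<open>0 < l\<close>])
    also have "l\<^sup>2 * \<sigma>\<^sup>2 / 2 - l * t = - c"
      using 3 by (simp add: l_def t_def field_simps power2_eq_square)
    finally show ?thesis by (simp add: t_def)
  qed
qed

lemma prob_many_indep_events_le:
  fixes A :: "'i \<Rightarrow> 'a set" and k :: nat
  assumes indep: "indep_events A I" and "finite I" and r: "\<And>i. i \<in> I \<Longrightarrow> prob (A i) \<le> r"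
  defines "E \<equiv> {x\<in>space M. k \<le> card {i\<in>I. x \<in> A i}}"
  shows "E \<in> events" and "prob E \<le> real (card I choose k) * r ^ k"
proof -
  have A: "A i \<in> events" if "i \<in> I" for i using indep that by (auto simp: indep_events_def)
  have "E \<in> events \<and> prob E \<le> real (card I choose k) * r ^ k"
  proof (cases "k = 0")
    case True
    then show ?thesis by (simp add: E_def)
  next
    case False
    define SS where "SS = {S. S \<subseteq> I \<and> card S = k}"
    have S: "S \<noteq> {}" "finite S" "S \<subseteq> I" "card S = k" if "S \<in> SS" for S
      using that False \<open>finite I\<close> by (auto simp: SS_def intro: finite_subset)
    have "finite SS" using \<open>finite I\<close> by (simp add: SS_def)
    have events_SS: "(\<Inter>i\<in>S. A i) \<in> events" if "S \<in> SS" for S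
      using S[OF that] A by (intro sets.finite_INT) auto
    have E_eq: "E = (\<Union>S\<in>SS. \<Inter>i\<in>S. A i)"
    proof (intro equalityI subsetI)
      fix x assume "x \<in> E"
      then have "k \<le> card {i\<in>I. x \<in> A i}" by (simp add: E_def)
      then obtain S where "S \<subseteq> {i\<in>I. x \<in> A i}" "card S = k"
        by (rule obtain_subset_with_card_n)
      then have "S \<in> SS" "x \<in> (\<Inter>i\<in>S. A i)" by (auto simp: SS_def)
      then show "x \<in> (\<Union>S\<in>SS. \<Inter>i\<in>S. A i)" by blast
    next
      fix x assume "x \<in> (\<Union>S\<in>SS. \<Inter>i\<in>S. A i)"
      then obtain S where "S \<in> SS" "\<forall>i\<in>S. x \<in> A i" by blast
      then have "S \<subseteq> {i\<in>I. x \<in> A i}" "x \<in> space M" using S A sets.sets_into_space by blast+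
      then show "x \<in> E" using card_mono[of "{i\<in>I. x \<in> A i}" S] S \<open>S \<in> SS\<close> \<open>finite I\<close>
        by (auto simp: E_def)
    qed
    have prob_INT: "prob (\<Inter>i\<in>S. A i) \<le> r ^ k" if "S \<in> SS" for S
    proof -
      have "prob (\<Inter>i\<in>S. A i) = (\<Prod>i\<in>S. prob (A i))"
        using indep S[OF that] by (auto simp: indep_events_def)
      also have "\<dots> \<le> (\<Prod>i\<in>S. r)" using S[OF that] r by (intro prod_mono) auto
      also have "\<dots> = r ^ k" using S[OF that] by simp
      finally show ?thesis .
    qed
    have "prob E \<le> (\<Sum>S\<in>SS. prob (\<Inter>i\<in>S. A i))"
      unfolding E_eq using \<open>finite SS\<close> events_SS by (intro finite_measure_subadditive_finite) auto
    also have "\<dots> \<le> (\<Sum>S\<in>SS. r ^ k)" using prob_INT by (rule sum_mono)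
    also have "\<dots> = real (card I choose k) * r ^ k"
      using n_subsets[OF \<open>finite I\<close>] by (simp add: SS_def)
    finally show ?thesis unfolding E_eq using \<open>finite SS\<close> events_SS by auto
  qed
  then show "E \<in> events" "prob E \<le> real (card I choose k) * r ^ k" by auto
qed

end

lemma two_le_exp_seven_tenths: "2 \<le> exp (7/10 :: real)"
proof -
  have "ln 2 \<le> (7/10 :: real)" using ln2_le_25_over_36 by simp
  then show ?thesis by (metis exp_le_cancel_iff exp_ln zero_less_numeral)
qed

lemma binomial_mult_exp_power_le:
  fixes n k :: nat and c :: real
  assumes "real n \<le> c * real k"
  shows "real (n choose k) * exp (- c) ^ k \<le> exp (- (3/10) * real n)"
proof -
  have "real (n choose k) \<le> 2 ^ n" using binomial_le_pow2[of n k] by (simp flip: of_nat_le_iff)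
  also have "\<dots> \<le> exp (7/10) ^ n" using two_le_exp_seven_tenths by (rule power_mono) simp
  also have "\<dots> = exp (7/10 * real n)" by (metis exp_of_nat_mult mult.commute)
  finally have "real (n choose k) \<le> exp (7/10 * real n)" .
  moreover have "exp (- c) ^ k \<le> exp (- real n)"
    using assms by (simp add: exp_of_nat_mult[symmetric] mult.commute)
  ultimately have "real (n choose k) * exp (- c) ^ k \<le> exp (7/10 * real n) * exp (- real n)"
    by (intro mult_mono) auto
  also have "\<dots> = exp (- (3/10) * real n)" by (simp flip: exp_add)
  finally show ?thesis .
qed

context prob_space
begin

lemma indep_subgaussian_few_exceedances:
  fixes Z :: "'i \<Rightarrow> 'a \<Rightarrow> real" and k :: nat
  assumes indep: "indep_vars (\<lambda>_. borel) Z I" and "finite I"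
    and subgaussian: "\<And>i. i \<in> I \<Longrightarrow> subgaussian M (Z i) (\<sigma>\<^sup>2)"
    and "0 \<le> \<sigma>" "0 \<le> c" and ck: "real (card I) \<le> c * real k"
  defines "B \<equiv> \<sigma> * sqrt (2 * c)"
  shows "\<exists>E\<in>events. 1 - 2 * exp (- (3/10) * real (card I)) \<le> prob E \<and>
    (\<forall>x\<in>E. card {i\<in>I. B < Z i x} < k \<and> card {i\<in>I. Z i x < - B} < k)"
proof -
  define many where "many P = {x\<in>space M. k \<le> card {i\<in>I. x \<in> {x\<in>space M. P (Z i x)}}}"
    for P :: "real \<Rightarrow> bool"
  have many: "many P \<in> events \<and> prob (many P) \<le> exp (- (3/10) * real (card I))"
    if "{y. P y} \<in> sets borel" "\<And>i. i \<in> I \<Longrightarrow> prob {x\<in>space M. P (Z i x)} \<le> exp (- c)" for P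
  proof -
    have "indep_events (\<lambda>i. {x\<in>space M. P (Z i x)}) I"
      using indep that(1) by (intro indep_eventsI_indep_vars) auto
    then show ?thesis
      using prob_many_indep_events_le[of "\<lambda>i. {x\<in>space M. P (Z i x)}" I "exp (- c)" k]
        \<open>finite I\<close> that(2) binomial_mult_exp_power_le[OF ck]
      unfolding many_def by (blast intro: order_trans)
  qed
  have upper: "many (\<lambda>y. B < y) \<in> events \<and> prob (many (\<lambda>y. B < y)) \<le> exp (- (3/10) * real (card I))"
    using subgaussian_tail[OF subgaussian \<open>0 \<le> \<sigma>\<close> \<open>0 \<le> c\<close>] by (intro many) (auto simp: B_def)
  have lower: "many (\<lambda>y. y < - B) \<in> events \<and> prob (many (\<lambda>y. y < - B)) \<le> exp (- (3/10) * real (card I))"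
    using subgaussian_tail[OF subgaussian_uminus[OF subgaussian] \<open>0 \<le> \<sigma>\<close> \<open>0 \<le> c\<close>]
    by (intro many) (auto simp: B_def less_minus_iff)
  define E where "E = space M - (many (\<lambda>y. B < y) \<union> many (\<lambda>y. y < - B))"
  have "prob E = 1 - prob (many (\<lambda>y. B < y) \<union> many (\<lambda>y. y < - B))"
    unfolding E_def by (rule prob_compl) (use upper lower in auto)
  moreover have "prob (many (\<lambda>y. B < y) \<union> many (\<lambda>y. y < - B))
      \<le> prob (many (\<lambda>y. B < y)) + prob (many (\<lambda>y. y < - B))"
    using upper lower by (intro measure_Un_le) auto
  ultimately have "1 - 2 * exp (- (3/10) * real (card I)) \<le> prob E" using upper lower by linarith
  moreover have "E \<in> events" using upper lower by (auto simp: E_def)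
  moreover have "card {i\<in>I. B < Z i x} < k \<and> card {i\<in>I. Z i x < - B} < k" if "x \<in> E" for x
    using that by (auto simp: E_def many_def)
  ultimately show ?thesis by blast
qed

end

theorem mainTheorem3:
  fixes M :: "'a measure" and Z :: "nat \<Rightarrow> 'a \<Rightarrow> real" and n :: nat
    and \<sigma> \<alpha> p0 :: real
  assumes "prob_space M"
    and "prob_space.indep_vars M (\<lambda>_. borel) Z {..<n}"
    and "\<And>i. i < n \<Longrightarrow> subgaussian M (Z i) (\<sigma>\<^sup>2)"
    and "\<sigma> \<ge> 0"
    and "0 < \<alpha>" and "\<alpha> \<le> 1"
    and "0 < p0" and "p0 \<le> 1/2"
  shows "\<exists>E \<in> sets M. measure M E \<ge> 1 - 2 * exp (- (3/10) * real n) \<and>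
    (\<forall>\<omega>\<in>E. \<forall>p. p0 \<le> p \<and> p \<le> 1/2 \<longrightarrow>
       (\<forall>V \<subseteq> {..<n}. real (card V) \<ge> max (real n * \<alpha>) (2 / p0) \<longrightarrow>
          (let W = image_mset (\<lambda>i. Z i \<omega>) (mset_set V);
               m = real (card V);
               B = \<sigma> * sqrt (4 / p0 * (1 / \<alpha> + 1))
           in - B \<le> ord_stat W (nat \<lceil>(1 - p) * m\<rceil>)
              \<and> ord_stat W (nat \<lceil>(1 - p) * m\<rceil>) \<le> ord_stat W (nat \<lfloor>p * m\<rfloor>)
              \<and> ord_stat W (nat \<lfloor>p * m\<rfloor>) \<le> B)))"
proof -
  interpret prob_space M by fact
  define c where "c = 2 / p0 * (1 / \<alpha> + 1)"
  define k where "k = nat \<lceil>p0 * (real n * \<alpha>) / 2\<rceil>"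
  have "0 \<le> c" using assms(5,7) by (simp add: c_def)
  have "real n \<le> c * real k"
  proof -
    have "real n \<le> real n * (1 + \<alpha>)" using assms(5) by (simp add: ring_distribs)
    also have "\<dots> = c * (p0 * (real n * \<alpha>) / 2)" using assms(5,7) by (simp add: c_def field_simps)
    also have "\<dots> \<le> c * real k"
      using \<open>0 \<le> c\<close> real_nat_ceiling_ge by (intro mult_left_mono) (simp_all add: k_def)
    finally show ?thesis .
  qed
  then obtain E where E: "E \<in> sets M" "1 - 2 * exp (- (3/10) * real n) \<le> prob E"
    and few: "\<And>\<omega>. \<omega> \<in> E \<Longrightarrow> card {i\<in>{..<n}. \<sigma> * sqrt (2 * c) < Z i \<omega>} < k
                              \<and> card {i\<in>{..<n}. Z i \<omega> < - (\<sigma> * sqrt (2 * c))} < k"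
    using indep_subgaussian_few_exceedances[OF assms(2) finite_lessThan _ assms(4) \<open>0 \<le> c\<close>, of k]
      assms(3) by force
  have k_le: "real k \<le> p * real (card V)"
    if "p0 \<le> p" "max (real n * \<alpha>) (2 / p0) \<le> real (card V)" for p V
  proof (unfold k_def, rule nat_ceiling_half_le)
    show "p0 * (real n * \<alpha>) \<le> p * real (card V)" "2 \<le> p * real (card V)"
      using mult_mono[of p0 p "real n * \<alpha>" "card V"] mult_mono[of p0 p "2 / p0" "card V"] that assms(5,7)
      by auto
  qed
  have B: "\<sigma> * sqrt (4 / p0 * (1 / \<alpha> + 1)) = \<sigma> * sqrt (2 * c)" by (simp add: c_def)
  show ?thesis
    unfolding Let_def B
    by (intro bexI[OF _ E(1)] conjI[OF E(2)] ballI allI impI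
        ord_stats_of_subfamily_within_thresholds[where I = "{..<n}" and k = k])
      (use few k_le assms(7) in auto)
qed

end
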